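(* Let $\Sigma$ be a set, $A\in\mathrm{Abs}(\wp(\Sigma))$ with Galois insertion $(\alpha,\wp(\Sigma),A,\gamma)$, and $F$ a set of functions $f:\wp(\Sigma)^{\sharp(f)}\to\wp(\Sigma)$ with $\sharp(f)\ge1$. Let $\mathcal{L}_{A,F}$ be the language with atoms the elements $a\in A$ and operators the elements of $F$, with semantic structure $\mathcal{S}_{A,F}=(\Sigma,I)$ where $I(a)=\gamma(a)$ and $I(f)=f$. Assume $\mathcal{L}_{A,F}$ is closed under infinite logical conjunction. Then $\mathrm{AD}_{\mathcal{L}_{A,F}}=\mathcal{S}_F(A)$.
   Context: For a language $\mathcal{L}$ (formulae $\varphi::=p\mid f(\varphi_1,..,\varphi_n)$) with semantic structure $(\Sigma,I)$, the concrete semantics is $[\![p]\!]=I(p)$, $[\![f(\varphi_1,..,\varphi_n)]\!]=I(f)([\![\varphi_1]\!],..,[\![\varphi_n]\!])$. $\mathcal{L}$ is closed under infinite logical conjunction if for every $\Phi\subseteq\mathcal{L}$ (including $\varnothing$) there is $\psi$ with $[\![\psi]\!]=\bigcap_{\varphi\in\Phi}[\![\varphi]\!]$ (empty intersection $=\Sigma$). $\mathrm{AD}_{\mathcal{L}}$ is the abstract domain (upper closure operator on $\wp(\Sigma)$) whose image is the set of intersections of subfamilies of $\{[\![\varphi]\!]\mid\varphi\in\mathcal{L}\}$. Abstract domains of $\wp(\Sigma)$ are given by Galois insertions $(\alpha,\wp(\Sigma),A,\gamma)$ and identified with their closures $\gamma\circ\alpha$, ordered pointwise ($\sqsubseteq$: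 more precise). A closure $\rho$ is forward complete for $f$ if $f(\rho(X_1),..,\rho(X_n))=\rho(f(\rho(X_1),..,\rho(X_n)))$ for all $X_i$; $\mathcal{S}_F(A)$, the forward $F$-complete shell of $A$, is the most abstract closure $\rho\sqsubseteq\gamma\circ\alpha$ that is forward complete for every $f\in F$. *)

theory Defs
  imports Main
begin

text \<open>An operator symbol is a pair (arity, function on lists of sets).\<close>

datatype ('b, 's) form =
    Atom 'b
  | Op "nat \<times> ('s set list \<Rightarrow> 's set)" "('b, 's) form list"

inductive wf_form :: "(nat \<times> ('s set list \<Rightarrow> 's set)) set \<Rightarrow> ('b, 's) form \<Rightarrow> bool"
  for F where
  wf_Atom: "wf_form F (Atom a)"
| wf_Op: "(n, f) \<in> F \<Longrightarrow> length args = n \<Longrightarrow> (\<forall>\<phi>\<in>set args. wf_form F \<phi>)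
           \<Longrightarrow> wf_form F (Op (n, f) args)"

fun sem :: "('b \<Rightarrow> 's set) \<Rightarrow> ('b, 's) form \<Rightarrow> 's set" where
  "sem \<gamma> (Atom a) = \<gamma> a"
| "sem \<gamma> (Op nf args) = snd nf (map (sem \<gamma>) args)"

definition lang :: "(nat \<times> ('s set list \<Rightarrow> 's set)) set \<Rightarrow> ('b, 's) form set" where
  "lang F = {\<phi>. wf_form F \<phi>}"

text \<open>Closure under infinite logical conjunction (empty intersection = UNIV = Sigma).\<close>

definition closed_inf_conj :: "('b \<Rightarrow> 's set) \<Rightarrow> ('b, 's) form set \<Rightarrow> bool" where
  "closed_inf_conj \<gamma> L \<longleftrightarrow>
     (\<forall>\<Phi> \<subseteq> L. \<exists>\<psi>\<in>L. sem \<gamma> \<psi> = (\<Inter>\<phi>\<in>\<Phi>. sem \<gamma> \<phi>))"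

definition galois_insertion :: "('s set \<Rightarrow> 'b::order) \<Rightarrow> ('b \<Rightarrow> 's set) \<Rightarrow> bool" where
  "galois_insertion \<alpha> \<gamma> \<longleftrightarrow>
     (\<forall>X b. \<alpha> X \<le> b \<longleftrightarrow> X \<subseteq> \<gamma> b) \<and> (\<forall>b. \<alpha> (\<gamma> b) = b)"

text \<open>Upper closure operators on \<wp>(Sigma); they are ordered pointwise by the
  function order \<le> (smaller = more precise).\<close>

definition uco :: "('s set \<Rightarrow> 's set) \<Rightarrow> bool" where
  "uco \<rho> \<longleftrightarrow> (\<forall>X. X \<subseteq> \<rho> X) \<and> (\<forall>X Y. X \<subseteq> Y \<longrightarrow> \<rho> X \<subseteq> \<rho> Y) \<and> (\<forall>X. \<rho> (\<rho> X) = \<rho> X)"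

definition AD :: "('b \<Rightarrow> 's set) \<Rightarrow> ('b, 's) form set \<Rightarrow> 's set \<Rightarrow> 's set" where
  "AD \<gamma> L X = \<Inter>{Y. (\<exists>S \<subseteq> sem \<gamma> ` L. Y = \<Inter>S) \<and> X \<subseteq> Y}"

definition fwd_complete :: "('s set \<Rightarrow> 's set) \<Rightarrow> nat \<times> ('s set list \<Rightarrow> 's set) \<Rightarrow> bool" where
  "fwd_complete \<rho> nf \<longleftrightarrow>
     (\<forall>Xs. length Xs = fst nf \<longrightarrow>
        snd nf (map \<rho> Xs) = \<rho> (snd nf (map \<rho> Xs)))"

definition fwd_shell :: "(nat \<times> ('s set list \<Rightarrow> 's set)) set \<Rightarrow> ('s set \<Rightarrow> 's set) \<Rightarrow> 's set \<Rightarrow> 's set" where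
  "fwd_shell F \<rho>A = (GREATEST \<rho>. uco \<rho> \<and> \<rho> \<le> \<rho>A \<and> (\<forall>nf\<in>F. fwd_complete \<rho> nf))"

end

theory Submission
  imports Defs
begin

text \<open>Closure under infinite conjunction makes the denotations of formulae a Moore
  family, so \<open>AD\<^sub>L\<close> is the closure whose fixpoints are exactly these denotations.
  They contain every \<open>\<gamma> a\<close> (the atoms) and are closed under every \<open>f \<in> F\<close> (the
  operators), which makes \<open>AD\<^sub>L\<close> a forward \<open>F\<close>-complete refinement of \<open>\<gamma> \<circ> \<alpha>\<close>.
  Conversely, a forward \<open>F\<close>-complete closure \<open>\<rho> \<le> \<gamma> \<circ> \<alpha>\<close> fixes every \<open>\<gamma> a\<close> and,
  by induction on formulae, every denotation; hence \<open>\<rho> X \<subseteq> \<rho> (AD\<^sub>L X) = AD\<^sub>L X\<close>.\<close>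

lemma Inter_in_sem_image:
  assumes "closed_inf_conj \<gamma> L" and "S \<subseteq> sem \<gamma> ` L"
  shows "\<Inter>S \<in> sem \<gamma> ` L"
proof -
  let ?\<Phi> = "{\<phi> \<in> L. sem \<gamma> \<phi> \<in> S}"
  have "\<exists>\<psi>\<in>L. sem \<gamma> \<psi> = (\<Inter>\<phi>\<in>?\<Phi>. sem \<gamma> \<phi>)"
    using assms(1) unfolding closed_inf_conj_def by (simp add: Collect_mono_iff)
  then obtain \<psi> where "\<psi> \<in> L" and \<psi>_sem: "sem \<gamma> \<psi> = (\<Inter>\<phi>\<in>?\<Phi>. sem \<gamma> \<phi>)" ..
  have "\<Inter>S = (\<Inter>\<phi>\<in>?\<Phi>. sem \<gamma> \<phi>)"
    using assms(2) by blast
  also have "\<dots> = sem \<gamma> \<psi>"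
    by (rule \<psi>_sem[symmetric])
  finally show ?thesis
    using \<open>\<psi> \<in> L\<close> by (simp only: imageI)
qed

lemma AD_in_sem_image:
  assumes "closed_inf_conj \<gamma> L"
  shows "AD \<gamma> L X \<in> sem \<gamma> ` L"
proof -
  have "{Y. (\<exists>S \<subseteq> sem \<gamma> ` L. Y = \<Inter>S) \<and> X \<subseteq> Y} \<subseteq> sem \<gamma> ` L"
    using Inter_in_sem_image[OF assms] by blast
  then show ?thesis
    unfolding AD_def by (rule Inter_in_sem_image[OF assms])
qed

lemma subset_AD: "X \<subseteq> AD \<gamma> L X"
  unfolding AD_def by blast

lemma AD_mono: "X \<subseteq> Y \<Longrightarrow> AD \<gamma> L X \<subseteq> AD \<gamma> L Y"
  unfolding AD_def by blast

lemma AD_sem_image_eq: "Y \<in> sem \<gamma> ` L \<Longrightarrow> AD \<gamma> L Y = Y"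
  unfolding AD_def by (rule antisym) (auto intro!: Inter_lower exI[of _ "{Y}"])

lemma uco_AD:
  assumes "closed_inf_conj \<gamma> L"
  shows "uco (AD \<gamma> L)"
  by (simp add: uco_def subset_AD AD_mono AD_sem_image_eq[OF AD_in_sem_image[OF assms]])

lemma AD_le_gamma_alpha:
  assumes "galois_insertion \<alpha> \<gamma>" and "\<And>b. \<gamma> b \<in> sem \<gamma> ` L"
  shows "AD \<gamma> L \<le> \<gamma> \<circ> \<alpha>"
proof (rule le_funI)
  fix X
  have "X \<subseteq> \<gamma> (\<alpha> X)"
    using assms(1) unfolding galois_insertion_def by blast
  then have "AD \<gamma> L X \<subseteq> AD \<gamma> L (\<gamma> (\<alpha> X))"
    by (rule AD_mono)
  also have "\<dots> = \<gamma> (\<alpha> X)"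
    using assms(2) by (rule AD_sem_image_eq)
  finally show "AD \<gamma> L X \<le> (\<gamma> \<circ> \<alpha>) X"
    by simp
qed

lemma gamma_in_sem_image_lang: "\<gamma> b \<in> sem \<gamma> ` lang F"
  by (rule image_eqI[of _ _ "Atom b"]) (auto simp: lang_def wf_Atom)

lemma fwd_complete_AD_lang:
  fixes \<gamma> :: "'b \<Rightarrow> 's set"
  assumes "closed_inf_conj \<gamma> (lang F)" and "nf \<in> F"
  shows "fwd_complete (AD \<gamma> (lang F)) nf"
  unfolding fwd_complete_def
proof (intro allI impI)
  fix Xs :: "'s set list"
  assume len: "length Xs = fst nf"
  let ?\<rho> = "AD \<gamma> (lang F)"
  have "map ?\<rho> Xs \<in> lists (sem \<gamma> ` lang F)"
    using AD_in_sem_image[OF assms(1)] by auto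
  then obtain args where args: "args \<in> lists (lang F)" and eq: "map ?\<rho> Xs = map (sem \<gamma>) args"
    unfolding lists_image by blast
  have "length args = fst nf"
    using len arg_cong[OF eq, of length] by simp
  with args assms(2) have "Op nf args \<in> lang F"
    by (cases nf) (auto simp: lang_def intro: wf_Op)
  then have "?\<rho> (sem \<gamma> (Op nf args)) = sem \<gamma> (Op nf args)"
    by (intro AD_sem_image_eq imageI)
  moreover have "snd nf (map ?\<rho> Xs) = sem \<gamma> (Op nf args)"
    using eq by simp
  ultimately show "snd nf (map ?\<rho> Xs) = ?\<rho> (snd nf (map ?\<rho> Xs))"
    by simp
qed

lemma closure_le_gamma_alpha_fixes_gamma:
  assumes "galois_insertion \<alpha> \<gamma>" and "uco \<rho>" and "\<rho> \<le> \<gamma> \<circ> \<alpha>"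
  shows "\<rho> (\<gamma> b) = \<gamma> b"
proof -
  have "\<rho> (\<gamma> b) \<subseteq> \<gamma> (\<alpha> (\<gamma> b))"
    using assms(3) by (simp add: le_fun_def)
  also have "\<dots> = \<gamma> b"
    using assms(1) unfolding galois_insertion_def by simp
  finally show ?thesis
    using assms(2) unfolding uco_def by auto
qed

lemma fwd_complete_fixes_sem:
  assumes "\<And>b. \<rho> (\<gamma> b) = \<gamma> b" and "\<forall>nf\<in>F. fwd_complete \<rho> nf"
    and "wf_form F \<phi>"
  shows "\<rho> (sem \<gamma> \<phi>) = sem \<gamma> \<phi>"
  using assms(3)
proof (induction rule: wf_form.induct)
  case (wf_Atom b)
  show ?case
    using assms(1) by simp
next
  case (wf_Op n f args)
  have args_fixed: "map \<rho> (map (sem \<gamma>) args) = map (sem \<gamma>) args"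
    using wf_Op.IH by (simp add: map_idI)
  have "fwd_complete \<rho> (n, f)"
    using assms(2) wf_Op.hyps(1) ..
  then have complete: "f (map \<rho> Xs) = \<rho> (f (map \<rho> Xs))" if "length Xs = n" for Xs
    using that unfolding fwd_complete_def by simp
  have "f (map \<rho> (map (sem \<gamma>) args)) = \<rho> (f (map \<rho> (map (sem \<gamma>) args)))"
    by (rule complete) (simp add: wf_Op.hyps(2))
  then show ?case
    unfolding args_fixed by simp
qed

lemma fwd_complete_closure_le_AD_lang:
  assumes "closed_inf_conj \<gamma> (lang F)" and "galois_insertion \<alpha> \<gamma>"
    and "uco \<rho>" and "\<rho> \<le> \<gamma> \<circ> \<alpha>" and "\<forall>nf\<in>F. fwd_complete \<rho> nf"
  shows "\<rho> \<le> AD \<gamma> (lang F)"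
proof (rule le_funI)
  fix X
  obtain \<phi> where "\<phi> \<in> lang F" and AD_eq: "AD \<gamma> (lang F) X = sem \<gamma> \<phi>"
    using AD_in_sem_image[OF assms(1)] by blast
  then have fixed: "\<rho> (sem \<gamma> \<phi>) = sem \<gamma> \<phi>"
    using fwd_complete_fixes_sem[OF closure_le_gamma_alpha_fixes_gamma[OF assms(2-4)] assms(5)]
    by (simp add: lang_def)
  have "\<rho> X \<subseteq> \<rho> (AD \<gamma> (lang F) X)"
    using assms(3) subset_AD[of X \<gamma> "lang F"] unfolding uco_def by blast
  then show "\<rho> X \<le> AD \<gamma> (lang F) X"
    unfolding AD_eq fixed .
qed

theorem theorem6p5:
  fixes \<alpha> :: "'s set \<Rightarrow> 'b::order"
    and \<gamma> :: "'b \<Rightarrow> 's set"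
    and F :: "(nat \<times> ('s set list \<Rightarrow> 's set)) set"
  assumes "galois_insertion \<alpha> \<gamma>"
    and "\<forall>nf\<in>F. fst nf \<ge> 1"
    and "closed_inf_conj \<gamma> (lang F :: ('b, 's) form set)"
  shows "AD \<gamma> (lang F :: ('b, 's) form set) = fwd_shell F (\<gamma> \<circ> \<alpha>)"
  unfolding fwd_shell_def
proof (rule Greatest_equality[symmetric])
  show "uco (AD \<gamma> (lang F)) \<and> AD \<gamma> (lang F) \<le> \<gamma> \<circ> \<alpha>
    \<and> (\<forall>nf\<in>F. fwd_complete (AD \<gamma> (lang F)) nf)"
    using uco_AD[OF assms(3)] AD_le_gamma_alpha[OF assms(1) gamma_in_sem_image_lang]
      fwd_complete_AD_lang[OF assms(3)] by blast
next
  fix \<rho>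
  assume "uco \<rho> \<and> \<rho> \<le> \<gamma> \<circ> \<alpha> \<and> (\<forall>nf\<in>F. fwd_complete \<rho> nf)"
  then show "\<rho> \<le> AD \<gamma> (lang F)"
    using fwd_complete_closure_le_AD_lang[OF assms(3,1)] by blast
qed

end
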